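(* Let $X$ be a $d$-dimensional simplicial complex and let $c$ be a proper coloring of the vertices of $X$ such that no two $(d-1)$-dimensional faces of $X$ have the same pattern. Then $H_{d-1}(X)_T \cong H_{d-1}((X,c))_T$.
   Context: Homology has integer coefficients; $A_T$ denotes the torsion subgroup of an abelian group $A$. A coloring $c$ of $V(X)$ is proper if no two vertices joined by an edge of $X$ receive the same color. The pattern of a face is the multiset of colors of its vertices. For a proper coloring $c$, the pattern complex $(X,c)$ is the simplicial complex on the set of colors of $c$ in which a set $S$ of colors is a face if and only if $S$ is the pattern of some face of $X$. *)

theory Defs
  imports "HOL-Algebra.Algebra" "HOL-Library.Multiset"
begin

definition simplicial_complex :: "'a set set \<Rightarrow> bool" where
  "simplicial_complex K \<longleftrightarrow> finite K \<and> (\<forall>s\<in>K. finite s) \<and> (\<forall>s\<in>K. \<forall>t. t \<subseteq> s \<longrightarrow> t \<in> K)"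

definition vertices :: "'a set set \<Rightarrow> 'a set" where
  "vertices K = \<Union>K"

definition dimension_is :: "'a set set \<Rightarrow> nat \<Rightarrow> bool" where
  "dimension_is K d \<longleftrightarrow> (\<exists>s\<in>K. card s = d + 1) \<and> (\<forall>s\<in>K. card s \<le> d + 1)"

text \<open>k-dimensional faces (k an integer; no faces in negative dimension, so homology is unreduced).\<close>
definition kfaces :: "'a set set \<Rightarrow> int \<Rightarrow> 'a set set" where
  "kfaces K k = {s\<in>K. s \<noteq> {} \<and> int (card s) = k + 1}"

text \<open>Oriented simplices are oriented by the increasing order of vertices.\<close>

definition chain_group :: "'a set set \<Rightarrow> int \<Rightarrow> ('a set \<Rightarrow> int) monoid" where
  "chain_group K k = \<lparr>carrier = {f. \<forall>s. s \<notin> kfaces K k \<longrightarrow> f s = 0},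
                      monoid.mult = (\<lambda>f g s. f s + g s), monoid.one = (\<lambda>_. 0)\<rparr>"

definition boundary :: "'a::linorder set set \<Rightarrow> int \<Rightarrow> ('a set \<Rightarrow> int) \<Rightarrow> ('a set \<Rightarrow> int)" where
  "boundary K k f = (\<lambda>t. if t \<in> kfaces K (k - 1)
      then (\<Sum>s\<in>{s\<in>kfaces K k. t \<subseteq> s}.
              (-1) ^ card {u\<in>s. u < the_elem (s - t)} * f s)
      else 0)"

definition cycles :: "'a::linorder set set \<Rightarrow> int \<Rightarrow> ('a set \<Rightarrow> int) set" where
  "cycles K k = {f\<in>carrier (chain_group K k). boundary K k f = (\<lambda>_. 0)}"

definition boundaries :: "'a::linorder set set \<Rightarrow> int \<Rightarrow> ('a set \<Rightarrow> int) set" where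
  "boundaries K k = boundary K (k + 1) ` carrier (chain_group K (k + 1))"

definition homology :: "'a::linorder set set \<Rightarrow> int \<Rightarrow> ('a set \<Rightarrow> int) set monoid" where
  "homology K k = (chain_group K k)\<lparr>carrier := cycles K k\<rparr> Mod boundaries K k"

definition torsion_subgroup :: "('a, 'b) monoid_scheme \<Rightarrow> ('a, 'b) monoid_scheme" where
  "torsion_subgroup G = G\<lparr>carrier := {x\<in>carrier G. \<exists>n::nat. n > 0 \<and> x [^]\<^bsub>G\<^esub> n = \<one>\<^bsub>G\<^esub>}\<rparr>"

definition proper_coloring :: "'a set set \<Rightarrow> ('a \<Rightarrow> 'b) \<Rightarrow> bool" where
  "proper_coloring K c \<longleftrightarrow> (\<forall>u v. {u, v} \<in> K \<and> u \<noteq> v \<longrightarrow> c u \<noteq> c v)"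

definition pattern :: "('a \<Rightarrow> 'b) \<Rightarrow> 'a set \<Rightarrow> 'b multiset" where
  "pattern c s = image_mset c (mset_set s)"

definition pattern_complex :: "'a set set \<Rightarrow> ('a \<Rightarrow> 'b) \<Rightarrow> 'b set set" where
  "pattern_complex K c = {S. finite S \<and> (\<exists>s\<in>K. mset_set S = pattern c s)}"

end

theory Submission
  imports Defs
begin

text \<open>Since c is proper, a face s of K is mapped bijectively onto its colour set c ` s, which
  is also its pattern; so the pattern complex is the image of K under s \<mapsto> c ` s.
  Distinct ridge patterns make this map injective on ridges, and hence on facets, since a
  facet is the union of its ridges. Transporting chains along it, twisted by the sign of the
  permutation by which c reorders the vertices of each face, gives an isomorphism of
  (d-1)-chains that commutes with the boundary from degree d and therefore maps boundaries
  onto boundaries. The torsion of H_(d-1) only depends on these data, because a chain that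
  has a multiple among the boundaries is already a cycle.\<close>

lemma nat_pow_update_carrier:
  fixes M :: "('a, 'b) monoid_scheme" and n :: nat
  shows "x [^]\<^bsub>(M\<lparr>carrier := S\<rparr>)\<^esub> n = x [^]\<^bsub>M\<^esub> n"
  by (simp add: nat_pow_def)

lemma iso_torsion_subgroup:
  assumes h: "h \<in> iso G H" and G: "group G" and H: "group H"
  shows "h \<in> iso (torsion_subgroup G) (torsion_subgroup H)"
proof -
  interpret group_hom G H h
    using h G H by (simp add: group_hom_def group_hom_axioms_def iso_imp_homomorphism)
  have inj: "inj_on h (carrier G)" and surj: "h ` carrier G = carrier H"
    using h by (auto simp: Group.iso_iff)
  have torsion_iff: "h x [^]\<^bsub>H\<^esub> n = \<one>\<^bsub>H\<^esub> \<longleftrightarrow> x [^]\<^bsub>G\<^esub> n = \<one>\<^bsub>G\<^esub>"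
    if x: "x \<in> carrier G" for x and n :: nat
  proof -
    have "h x [^]\<^bsub>H\<^esub> n = h (x [^]\<^bsub>G\<^esub> n)" using x by (simp add: hom_nat_pow)
    moreover have "h (x [^]\<^bsub>G\<^esub> n) = h \<one>\<^bsub>G\<^esub> \<longleftrightarrow> x [^]\<^bsub>G\<^esub> n = \<one>\<^bsub>G\<^esub>"
      using x by (intro inj_on_eq_iff[OF inj]) auto
    ultimately show ?thesis by simp
  qed
  have image: "h ` carrier (torsion_subgroup G) = carrier (torsion_subgroup H)"
  proof
    show "h ` carrier (torsion_subgroup G) \<subseteq> carrier (torsion_subgroup H)"
      by (auto simp: torsion_subgroup_def torsion_iff)
  next
    show "carrier (torsion_subgroup H) \<subseteq> h ` carrier (torsion_subgroup G)"
    proof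
      fix y assume "y \<in> carrier (torsion_subgroup H)"
      then obtain n :: nat where y: "y \<in> carrier H" "n > 0" "y [^]\<^bsub>H\<^esub> n = \<one>\<^bsub>H\<^esub>"
        by (auto simp: torsion_subgroup_def)
      moreover obtain x where "x \<in> carrier G" "y = h x"
        using y(1) surj by blast
      ultimately show "y \<in> h ` carrier (torsion_subgroup G)"
        by (auto simp: torsion_subgroup_def torsion_iff)
    qed
  qed
  moreover have "h \<in> hom (torsion_subgroup G) (torsion_subgroup H)"
    using image by (auto simp: hom_def torsion_subgroup_def)
  moreover have "inj_on h (carrier (torsion_subgroup G))"
    using inj by (rule inj_on_subset) (auto simp: torsion_subgroup_def)
  ultimately show ?thesis by (simp add: Group.iso_iff)
qed

lemma iso_FactGroup:
  assumes h: "h \<in> iso G H" and G: "group G" and H: "group H"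
    and N: "N \<lhd> G" and M: "M \<lhd> H" and NM: "h ` N = M"
  shows "G Mod N \<cong> H Mod M"
proof -
  interpret M: normal M H by (rule M)
  have hom: "h \<in> hom G H" and inj: "inj_on h (carrier G)" and surj: "h ` carrier G = carrier H"
    using h by (auto simp: Group.iso_iff)
  let ?q = "(#>\<^bsub>H\<^esub>) M \<circ> h"
  interpret q: group_hom G "H Mod M" ?q
    using hom_compose[OF hom M.r_coset_hom_Mod] G M.factorgroup_is_group
    by (simp add: group_hom_def group_hom_axioms_def)
  have "kernel G (H Mod M) ?q = N"
  proof -
    have NG: "N \<subseteq> carrier G" using N by (simp add: normal_def subgroup.subset)
    have hG: "h x \<in> carrier H" if "x \<in> carrier G" for x
      using hom that by (simp add: hom_def Pi_iff)
    have "M #>\<^bsub>H\<^esub> h x = M \<longleftrightarrow> x \<in> N" if x: "x \<in> carrier G" for x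
    proof -
      have "M #>\<^bsub>H\<^esub> h x = M \<longleftrightarrow> h x \<in> M"
        using M.coset_join1[OF _ hG[OF x] M.subgroup_axioms]
          M.coset_join2[OF hG[OF x] M.subgroup_axioms] by blast
      also have "\<dots> \<longleftrightarrow> x \<in> N"
        using inj_on_image_mem_iff[OF inj x NG] NM by simp
      finally show ?thesis .
    qed
    then show ?thesis using NG by (auto simp: kernel_def)
  qed
  moreover have "?q ` carrier G = carrier (H Mod M)"
    unfolding carrier_FactGroup surj[symmetric] by (simp add: image_comp)
  ultimately show ?thesis using q.FactGroup_iso by simp
qed

lemma carrier_chain_group: "carrier (chain_group K k) = {f. \<forall>s. s \<notin> kfaces K k \<longrightarrow> f s = 0}"
  and mult_chain_group: "x \<otimes>\<^bsub>chain_group K k\<^esub> y = (\<lambda>s. x s + y s)"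
  and one_chain_group: "\<one>\<^bsub>chain_group K k\<^esub> = (\<lambda>_. 0)"
  by (simp_all add: chain_group_def)

lemma nat_pow_chain_group: "f [^]\<^bsub>chain_group K k\<^esub> n = (\<lambda>s. int n * f s)"
  by (induction n) (simp_all add: mult_chain_group one_chain_group algebra_simps)

lemma comm_group_chain_group: "comm_group (chain_group K k)"
proof (rule comm_groupI)
  fix x assume "x \<in> carrier (chain_group K k)"
  then show "\<exists>y\<in>carrier (chain_group K k). y \<otimes>\<^bsub>chain_group K k\<^esub> x = \<one>\<^bsub>chain_group K k\<^esub>"
    by (intro bexI[of _ "\<lambda>s. - x s"]) (auto simp: chain_group_def)
qed (auto simp: chain_group_def add.assoc add.commute)

lemma group_chain_group: "group (chain_group K k)"
  using comm_group_chain_group comm_group_def by blast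

lemma boundary_add: "boundary K k (\<lambda>s. f s + g s) = (\<lambda>t. boundary K k f t + boundary K k g t)"
  by (auto simp: boundary_def fun_eq_iff sum.distrib algebra_simps)

lemma boundary_scale: "boundary K k (\<lambda>s. m * f s) = (\<lambda>t. m * boundary K k f t)"
  by (auto simp: boundary_def fun_eq_iff sum_distrib_left algebra_simps)

lemma boundary_hom: "boundary K k \<in> hom (chain_group K k) (chain_group K (k - 1))"
  by (auto simp: hom_def carrier_chain_group mult_chain_group boundary_add) (simp add: boundary_def)

lemma normal_boundaries: "boundaries K k \<lhd> chain_group K k"
proof -
  interpret group_hom "chain_group K (k + 1)" "chain_group K k" "boundary K (k + 1)"
    using boundary_hom[of K "k + 1"]
    by (simp add: group_hom_def group_hom_axioms_def group_chain_group)
  show ?thesis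
    using comm_group.subgroup_imp_normal[OF comm_group_chain_group img_is_subgroup]
    by (simp add: boundaries_def)
qed

definition incidence :: "'a::linorder set \<Rightarrow> 'a set \<Rightarrow> int" where
  "incidence s t = (-1) ^ card {u\<in>s. u < the_elem (s - t)}"

lemma boundary_apply:
  "boundary K k f t = (if t \<in> kfaces K (k - 1)
     then \<Sum>s\<in>{s\<in>kfaces K k. t \<subseteq> s}. incidence s t * f s else 0)"
  by (simp add: boundary_def incidence_def)

lemma incidence_diamond:
  fixes a b :: "'a::linorder"
  assumes t: "finite t" and a: "a \<notin> t" and b: "b \<notin> t" and ab: "a < b"
  shows "incidence (insert a t) t * incidence (insert a (insert b t)) (insert a t)
       + incidence (insert b t) t * incidence (insert a (insert b t)) (insert b t) = 0"
proof -
  let ?s = "insert a (insert b t)"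
  have diff: "insert a t - t = {a}" "insert b t - t = {b}" "?s - insert a t = {b}" "?s - insert b t = {a}"
    using a b ab by auto
  have below: "{u\<in>insert a t. u < a} = {u\<in>t. u < a}" "{u\<in>insert b t. u < b} = {u\<in>t. u < b}"
    "{u\<in>?s. u < b} = insert a {u\<in>t. u < b}" "{u\<in>?s. u < a} = {u\<in>t. u < a}"
    using ab by auto
  have card: "card (insert a {u\<in>t. u < b}) = Suc (card {u\<in>t. u < b})"
    using t a by simp
  show ?thesis unfolding incidence_def diff the_elem_eq below card by simp
qed

lemma sum_incidence_interval:
  fixes s t :: "'a::linorder set"
  assumes fs: "finite s" and ts: "t \<subseteq> s" and cs: "card s = card t + 2"
  shows "(\<Sum>r\<in>{r. t \<subseteq> r \<and> r \<subseteq> s \<and> card r = card t + 1}. incidence r t * incidence s r) = 0"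
proof -
  have ft: "finite t" using fs ts finite_subset by blast
  have "card (s - t) = 2" using cs ts ft by (simp add: card_Diff_subset)
  then obtain x y where "s - t = {x, y}" "x \<noteq> y" by (auto simp: card_2_iff)
  then obtain a b where ab: "s - t = {a, b}" "a < b"
    by (metis insert_commute linorder_neqE)
  have abt: "a \<notin> t" "b \<notin> t" using ab(1) by auto
  have s_eq: "s = insert a (insert b t)" using ab(1) ts by auto
  have R: "{r. t \<subseteq> r \<and> r \<subseteq> s \<and> card r = card t + 1} = {insert a t, insert b t}"
  proof (rule Set.set_eqI, rule iffI)
    fix r assume r: "r \<in> {r. t \<subseteq> r \<and> r \<subseteq> s \<and> card r = card t + 1}"
    then have "finite r" "t \<subseteq> r" using fs finite_subset by auto
    then have "card (r - t) = 1"
      using r ft by (simp add: card_Diff_subset)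
    then obtain z where z: "r - t = {z}" by (rule card_1_singletonE)
    have "z \<in> {a, b}" using z r ab(1) by blast
    moreover have "r = insert z t" using z r by blast
    ultimately show "r \<in> {insert a t, insert b t}" by blast
  next
    fix r assume "r \<in> {insert a t, insert b t}"
    then show "r \<in> {r. t \<subseteq> r \<and> r \<subseteq> s \<and> card r = card t + 1}"
      using s_eq abt ft by auto
  qed
  have ne: "insert a t \<noteq> insert b t" using abt ab(2) by auto
  show ?thesis unfolding R using ne incidence_diamond[OF ft abt ab(2)] s_eq by simp
qed

lemma boundary_boundary:
  fixes K :: "'a::linorder set set"
  assumes K: "simplicial_complex K"
  shows "boundary K k (boundary K (k + 1) h) = (\<lambda>_. 0)"
proof
  fix t
  show "boundary K k (boundary K (k + 1) h) t = 0"
  proof (cases "t \<in> kfaces K (k - 1)")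
    case False
    then show ?thesis by (simp add: boundary_def)
  next
    case True
    let ?R = "\<lambda>s. {r\<in>{r\<in>kfaces K k. t \<subseteq> r}. r \<subseteq> s}"
    have ct: "int (card t) = k" using True by (auto simp: kfaces_def)
    have inner: "(\<Sum>r\<in>?R s. incidence r t * incidence s r) = 0" if s: "s \<in> kfaces K (k + 1)" for s
    proof (cases "t \<subseteq> s")
      case False
      then have "?R s = {}" by auto
      then show ?thesis by (simp only: sum.empty)
    next
      case ts: True
      have fs: "finite s" and sK: "s \<in> K" and cs: "card s = card t + 2"
        using s K ct by (auto simp: kfaces_def simplicial_complex_def)
      have "?R s = {r. t \<subseteq> r \<and> r \<subseteq> s \<and> card r = card t + 1}"
      proof (rule Set.set_eqI, rule iffI)
        fix r assume "r \<in> {r. t \<subseteq> r \<and> r \<subseteq> s \<and> card r = card t + 1}"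
        moreover have "r \<in> K" if "r \<subseteq> s" using K sK that by (auto simp: simplicial_complex_def)
        ultimately show "r \<in> ?R s" using ct by (auto simp: kfaces_def)
      qed (use ct in \<open>auto simp: kfaces_def\<close>)
      then show ?thesis using sum_incidence_interval[OF fs ts cs] by simp
    qed
    have fin: "finite (kfaces K j)" for j using K by (simp add: simplicial_complex_def kfaces_def)
    have "boundary K k (boundary K (k + 1) h) t =
      (\<Sum>r\<in>{r\<in>kfaces K k. t \<subseteq> r}. \<Sum>s\<in>{s\<in>kfaces K (k + 1). r \<subseteq> s}. incidence r t * (incidence s r * h s))"
      using True by (auto simp: boundary_apply sum_distrib_left intro!: sum.cong)
    also have "\<dots> = (\<Sum>s\<in>kfaces K (k + 1). \<Sum>r\<in>?R s. incidence r t * (incidence s r * h s))"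
      by (rule sum.swap_restrict) (use fin in auto)
    also have "\<dots> = (\<Sum>s\<in>kfaces K (k + 1). h s * (\<Sum>r\<in>?R s. incidence r t * incidence s r))"
      by (simp add: sum_distrib_left algebra_simps)
    also have "\<dots> = 0" using inner by simp
    finally show ?thesis .
  qed
qed

lemma torsion_subgroup_homology:
  assumes "simplicial_complex K"
  shows "torsion_subgroup (homology K k) = torsion_subgroup (chain_group K k Mod boundaries K k)"
proof -
  let ?C = "chain_group K k" and ?B = "boundaries K k"
  interpret normal ?B ?C by (rule normal_boundaries)
  have torsion_cycle: "f \<in> cycles K k"
    if f: "f \<in> carrier ?C" and n: "n > 0" and nf: "(?B #>\<^bsub>?C\<^esub> f) [^]\<^bsub>?C Mod ?B\<^esub> n = ?B" for f and n :: nat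
  proof -
    have "?B #>\<^bsub>?C\<^esub> (f [^]\<^bsub>?C\<^esub> n) = ?B"
      using FactGroup_pow[OF f, of n] nf by simp
    then have "f [^]\<^bsub>?C\<^esub> n \<in> ?B"
      using f by (simp add: coset_join1 subgroup_axioms)
    then obtain h where "(\<lambda>s. int n * f s) = boundary K (k + 1) h"
      by (auto simp: boundaries_def nat_pow_chain_group)
    then have "(\<lambda>t. int n * boundary K k f t) = (\<lambda>_. 0)"
      using boundary_boundary[OF assms, of k h] by (simp add: boundary_scale[symmetric])
    then show ?thesis using f n by (simp add: cycles_def fun_eq_iff)
  qed
  have "homology K k = (?C Mod ?B)\<lparr>carrier := rcosets\<^bsub>?C\<lparr>carrier := cycles K k\<rparr>\<^esub> ?B\<rparr>"
    unfolding homology_def FactGroup_def set_mult_def by simp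
  also have "rcosets\<^bsub>?C\<lparr>carrier := cycles K k\<rparr>\<^esub> ?B = (\<lambda>f. ?B #>\<^bsub>?C\<^esub> f) ` cycles K k"
    by (auto simp: RCOSETS_def r_coset_def)
  finally have homology_eq: "homology K k = (?C Mod ?B)\<lparr>carrier := (\<lambda>f. ?B #>\<^bsub>?C\<^esub> f) ` cycles K k\<rparr>" .
  have "cycles K k \<subseteq> carrier ?C" by (auto simp: cycles_def)
  then have "{x \<in> (\<lambda>f. ?B #>\<^bsub>?C\<^esub> f) ` cycles K k. \<exists>n>0. x [^]\<^bsub>?C Mod ?B\<^esub> (n::nat) = ?B}
    = {x \<in> (\<lambda>f. ?B #>\<^bsub>?C\<^esub> f) ` carrier ?C. \<exists>n>0. x [^]\<^bsub>?C Mod ?B\<^esub> (n::nat) = ?B}"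
    using torsion_cycle by blast
  then show ?thesis
    by (simp add: torsion_subgroup_def carrier_FactGroup homology_eq nat_pow_update_carrier)
qed

lemma torsion_homology_iso:
  assumes K: "simplicial_complex K" and L: "simplicial_complex L"
    and \<phi>: "\<phi> \<in> iso (chain_group K k) (chain_group L k)"
    and \<phi>_boundaries: "\<phi> ` boundaries K k = boundaries L k"
  shows "torsion_subgroup (homology K k) \<cong> torsion_subgroup (homology L k)"
proof -
  have "chain_group K k Mod boundaries K k \<cong> chain_group L k Mod boundaries L k"
    using \<phi> \<phi>_boundaries by (intro iso_FactGroup) (simp_all add: group_chain_group normal_boundaries)
  then obtain \<psi> where "\<psi> \<in> iso (chain_group K k Mod boundaries K k) (chain_group L k Mod boundaries L k)"
    by (auto simp: is_iso_def)
  then have "\<psi> \<in> iso (torsion_subgroup (chain_group K k Mod boundaries K k))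
                     (torsion_subgroup (chain_group L k Mod boundaries L k))"
    by (simp add: iso_torsion_subgroup normal.factorgroup_is_group normal_boundaries)
  then show ?thesis
    by (auto simp: is_iso_def torsion_subgroup_homology[OF K] torsion_subgroup_homology[OF L])
qed

definition inversion_sign :: "('a::linorder \<Rightarrow> 'b::linorder) \<Rightarrow> 'a set \<Rightarrow> int" where
  "inversion_sign c s = (\<Prod>u\<in>s. \<Prod>v\<in>s. if u < v \<and> c v < c u then -1 else 1)"

lemma inversion_sign_square: "inversion_sign c s * inversion_sign c s = 1"
proof -
  have "\<bar>inversion_sign c s\<bar> = 1"
    by (simp add: inversion_sign_def abs_prod prod.neutral)
  then show ?thesis by (metis abs_mult_self_eq mult_1_left)
qed

lemma inversion_sign_insert:
  assumes "finite t" and "w \<notin> t"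
  shows "inversion_sign c (insert w t) = inversion_sign c t
           * (\<Prod>v\<in>t. if w < v \<and> c v < c w then -1 else 1)
           * (\<Prod>u\<in>t. if u < w \<and> c w < c u then -1 else 1)"
proof -
  let ?g = "\<lambda>u v. if u < v \<and> c v < c u then -1 else 1::int"
  have "inversion_sign c (insert w t)
      = (\<Prod>v\<in>insert w t. ?g w v) * (\<Prod>u\<in>t. \<Prod>v\<in>insert w t. ?g u v)"
    unfolding inversion_sign_def using assms by simp
  also have "\<dots> = (\<Prod>v\<in>t. ?g w v) * ((\<Prod>u\<in>t. ?g u w) * inversion_sign c t)"
    using assms by (simp add: prod.distrib inversion_sign_def)
  finally show ?thesis by (simp add: algebra_simps)
qed

lemma power_card_filter:
  assumes "finite A"
  shows "(-1::int) ^ card {u\<in>A. P u} = (\<Prod>u\<in>A. if P u then -1 else 1)"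
  using prod.inter_filter[OF assms, of "\<lambda>_. (-1::int)" P] by simp

lemma incidence_image:
  fixes c :: "'a::linorder \<Rightarrow> 'b::linorder"
  assumes t: "finite t" and w: "w \<notin> t" and inj: "inj_on c (insert w t)"
  shows "incidence (c ` insert w t) (c ` t) * inversion_sign c (insert w t)
       = inversion_sign c t * incidence (insert w t) t"
proof -
  let ?s = "insert w t"
  have cw: "c w \<notin> c ` t" using inj w by (auto simp: inj_on_def)
  have "c ` ?s - c ` t = {c w}" and "{U\<in>c ` ?s. U < c w} = c ` {u\<in>t. c u < c w}"
    using cw by auto
  moreover have "card (c ` {u\<in>t. c u < c w}) = card {u\<in>t. c u < c w}"
    by (rule card_image) (rule inj_on_subset[OF inj], auto)
  ultimately have image_sign: "incidence (c ` ?s) (c ` t) = (\<Prod>u\<in>t. if c u < c w then -1 else 1)"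
    unfolding incidence_def using t by (simp add: power_card_filter)
  have "?s - t = {w}" and "{u\<in>?s. u < w} = {u\<in>t. u < w}" using w by auto
  then have sign: "incidence ?s t = (\<Prod>u\<in>t. if u < w then -1 else 1)"
    unfolding incidence_def using t by (simp add: power_card_filter)
  have factor: "(if c u < c w then -1 else 1) * ((if w < u \<and> c u < c w then -1 else 1)
         * (if u < w \<and> c w < c u then -1 else 1)) = (if u < w then -1 else (1::int))"
    if u: "u \<in> t" for u
  proof -
    have "u \<noteq> w" and "c u \<noteq> c w" using u w cw by (auto simp: image_iff)
    then show ?thesis by (cases "u < w"; cases "c u < c w") (auto simp: not_less_iff_gr_or_eq)
  qed
  have "incidence (c ` ?s) (c ` t) * inversion_sign c ?s
    = inversion_sign c t * ((\<Prod>u\<in>t. if c u < c w then -1 else 1)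
        * ((\<Prod>v\<in>t. if w < v \<and> c v < c w then -1 else 1)
        * (\<Prod>u\<in>t. if u < w \<and> c w < c u then -1 else 1)))"
    unfolding image_sign inversion_sign_insert[OF t w] by (simp add: algebra_simps)
  also have "\<dots> = inversion_sign c t * (\<Prod>u\<in>t. if u < w then -1 else 1)"
    unfolding prod.distrib[symmetric] using factor by (simp cong: prod.cong)
  finally show ?thesis unfolding sign .
qed

lemma boundaries_minus_one:
  assumes "\<forall>s\<in>K. finite s"
  shows "boundaries K (-1) = {\<lambda>_. 0}"
proof -
  have "kfaces K (-1) = {}" using assms by (auto simp: kfaces_def)
  then have "boundary K 0 f = (\<lambda>_. 0)" for f by (simp add: boundary_def)
  moreover have "(\<lambda>_. 0) \<in> carrier (chain_group K 0)" by (simp add: carrier_chain_group)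
  ultimately show ?thesis by (auto simp: boundaries_def)
qed

locale pattern_coloring =
  fixes K :: "'a::linorder set set" and c :: "'a \<Rightarrow> 'b::linorder" and d :: nat
  assumes complex: "simplicial_complex K"
    and proper: "proper_coloring K c"
    and ridge_patterns_distinct: "\<forall>s\<in>kfaces K (int d - 1). \<forall>t\<in>kfaces K (int d - 1).
           pattern c s = pattern c t \<longrightarrow> s = t"
begin

abbreviation "Y \<equiv> pattern_complex K c"

lemma finite_face: "s \<in> K \<Longrightarrow> finite s"
  using complex by (simp add: simplicial_complex_def)

lemma face_subset: "s \<in> K \<Longrightarrow> t \<subseteq> s \<Longrightarrow> t \<in> K"
  using complex by (simp add: simplicial_complex_def)

lemma inj_on_face: "s \<in> K \<Longrightarrow> inj_on c s"
  using proper face_subset[of s "{_, _}"] by (auto simp: inj_on_def proper_coloring_def)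

lemma card_image_face: "s \<in> K \<Longrightarrow> card (c ` s) = card s"
  by (rule card_image[OF inj_on_face])

lemma pattern_face: "s \<in> K \<Longrightarrow> pattern c s = mset_set (c ` s)"
  by (simp add: pattern_def image_mset_mset_set[OF inj_on_face])

lemma pattern_complex_eq: "Y = (`) c ` K"
proof (rule Set.set_eqI, rule iffI)
  fix S assume "S \<in> Y"
  then obtain s where "finite S" "s \<in> K" "mset_set S = mset_set (c ` s)"
    by (auto simp: pattern_complex_def pattern_face)
  then have "S = c ` s" using finite_face by (metis finite_imageI finite_set_mset_mset_set)
  then show "S \<in> (`) c ` K" using \<open>s \<in> K\<close> by blast
qed (auto simp: pattern_complex_def pattern_face finite_face)

lemma simplicial_complex_pattern_complex: "simplicial_complex Y"
  unfolding simplicial_complex_def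
proof (intro conjI ballI allI impI)
  show "finite Y" unfolding pattern_complex_eq using complex by (simp add: simplicial_complex_def)
next
  fix S assume "S \<in> Y" then show "finite S" unfolding pattern_complex_eq using finite_face by auto
next
  fix S T assume "S \<in> Y" "T \<subseteq> S"
  then obtain s where s: "s \<in> K" "S = c ` s" unfolding pattern_complex_eq by blast
  then have "T = c ` {u\<in>s. c u \<in> T}" and "{u\<in>s. c u \<in> T} \<in> K"
    using \<open>T \<subseteq> S\<close> face_subset by auto
  then show "T \<in> Y" unfolding pattern_complex_eq by blast
qed

lemma kfaces_pattern_complex: "kfaces Y j = (`) c ` kfaces K j"
  by (auto simp: kfaces_def pattern_complex_eq card_image_face)

lemma inj_on_image_ridges: "inj_on ((`) c) (kfaces K (int d - 1))"
  using ridge_patterns_distinct by (auto simp: inj_on_def kfaces_def pattern_face)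

text \<open>A ridge whose colors occur in a face lies in that face: its colors are carried by a
  ridge of that face, which must be the ridge itself since ridge patterns are distinct.\<close>

lemma ridge_subset_if_colors_subset:
  assumes t: "t \<in> kfaces K (int d - 1)" and s: "s \<in> K" and ts: "c ` t \<subseteq> c ` s"
  shows "t \<subseteq> s"
proof -
  define t' where "t' = {u\<in>s. c u \<in> c ` t}"
  have t'K: "t' \<in> K" using face_subset[OF s] by (auto simp: t'_def)
  have "c ` t \<subseteq> c ` t'"
  proof
    fix y assume "y \<in> c ` t"
    moreover then obtain u where "u \<in> s" "y = c u" using ts by blast
    ultimately show "y \<in> c ` t'" by (auto simp: t'_def)
  qed
  then have colors: "c ` t' = c ` t" by (auto simp: t'_def)
  have "card t' = card t"
    using card_image_face[OF t'K] card_image_face[of t] t colors by (auto simp: kfaces_def)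
  moreover have "t' \<noteq> {}" using colors t by (auto simp: kfaces_def)
  ultimately have "t' \<in> kfaces K (int d - 1)" using t t'K by (auto simp: kfaces_def)
  then have "t' = t" using inj_on_image_ridges t colors by (auto dest: inj_onD)
  then show ?thesis by (auto simp: t'_def)
qed

lemma inj_on_image_facets:
  assumes "d \<ge> 1"
  shows "inj_on ((`) c) (kfaces K (int d))"
proof -
  have "s \<subseteq> s'" if s: "s \<in> kfaces K (int d)" "s' \<in> kfaces K (int d)" "c ` s = c ` s'" for s s'
  proof
    fix u assume u: "u \<in> s"
    have sK: "s \<in> K" and card_s: "card s = d + 1" using s by (auto simp: kfaces_def)
    obtain v where v: "v \<in> s" "v \<noteq> u"
    proof (rule ccontr)
      assume "\<not> thesis"
      with that have "s \<subseteq> {u}" by blast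
      then have "card s \<le> 1" using card_mono[of "{u}" s] by simp
      then show False using card_s assms by simp
    qed
    have "card (s - {v}) = d" using card_s v finite_face[OF sK] by simp
    moreover have "s - {v} \<noteq> {}" using u v by auto
    moreover have "s - {v} \<in> K" using face_subset[OF sK] by blast
    ultimately have "s - {v} \<in> kfaces K (int d - 1)" by (simp add: kfaces_def)
    moreover have "c ` (s - {v}) \<subseteq> c ` s'" using s(3) by blast
    ultimately have "s - {v} \<subseteq> s'"
      using ridge_subset_if_colors_subset s(2) by (auto simp: kfaces_def)
    then show "u \<in> s'" using u v by blast
  qed
  then show ?thesis by (intro inj_onI) blast
qed

text \<open>A chain of K is transported to Y along the relabelling s \<mapsto> c ` s; the inversion
  sign corrects for the change of the vertex order that orients each face.\<close>

definition pushforward :: "int \<Rightarrow> ('a set \<Rightarrow> int) \<Rightarrow> 'b set \<Rightarrow> int" where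
  "pushforward j f = (\<lambda>S. if S \<in> kfaces Y j
     then let s = the_inv_into (kfaces K j) ((`) c) S in inversion_sign c s * f s else 0)"

lemma pushforward_image:
  assumes "inj_on ((`) c) (kfaces K j)" and "s \<in> kfaces K j"
  shows "pushforward j f (c ` s) = inversion_sign c s * f s"
  using assms by (simp add: pushforward_def kfaces_pattern_complex the_inv_into_f_f)

lemma pushforward_iso:
  assumes inj: "inj_on ((`) c) (kfaces K j)"
  shows "pushforward j \<in> iso (chain_group K j) (chain_group Y j)"
proof (rule isoI)
  show "pushforward j \<in> hom (chain_group K j) (chain_group Y j)"
    by (auto simp: hom_def carrier_chain_group mult_chain_group pushforward_def fun_eq_iff Let_def
        algebra_simps)
  let ?pull = "\<lambda>G s. if s \<in> kfaces K j then inversion_sign c s * G (c ` s) else 0"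
  show "bij_betw (pushforward j) (carrier (chain_group K j)) (carrier (chain_group Y j))"
  proof (rule bij_betw_byWitness[where f' = ?pull])
    show "\<forall>f\<in>carrier (chain_group K j). ?pull (pushforward j f) = f"
      using inj by (auto simp: fun_eq_iff pushforward_image carrier_chain_group
          mult.assoc[symmetric] inversion_sign_square)
    show "\<forall>G\<in>carrier (chain_group Y j). pushforward j (?pull G) = G"
    proof (intro ballI ext)
      fix G S assume G: "G \<in> carrier (chain_group Y j)"
      show "pushforward j (?pull G) S = G S"
      proof (cases "S \<in> kfaces Y j")
        case True
        then obtain s where "s \<in> kfaces K j" "S = c ` s" by (auto simp: kfaces_pattern_complex)
        then show ?thesis
          using inj by (simp add: pushforward_image mult.assoc[symmetric] inversion_sign_square)
      next
        case False
        then show ?thesis using G by (simp add: pushforward_def carrier_chain_group)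
      qed
    qed
  qed (auto simp: carrier_chain_group pushforward_def)
qed

lemma cofaces_pattern_complex:
  assumes t: "t \<in> kfaces K (int d - 1)"
  shows "{S\<in>kfaces Y (int d). c ` t \<subseteq> S} = (`) c ` {s\<in>kfaces K (int d). t \<subseteq> s}"
proof (rule Set.set_eqI, rule iffI)
  fix S assume S: "S \<in> {S\<in>kfaces Y (int d). c ` t \<subseteq> S}"
  then obtain s where s: "s \<in> kfaces K (int d)" "S = c ` s" by (auto simp: kfaces_pattern_complex)
  then have "t \<subseteq> s" using ridge_subset_if_colors_subset[OF t] S by (auto simp: kfaces_def)
  then show "S \<in> (`) c ` {s\<in>kfaces K (int d). t \<subseteq> s}" using s by blast
qed (auto simp: kfaces_pattern_complex)

lemma boundary_pushforward:
  assumes "d \<ge> 1"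
  shows "boundary Y (int d) (pushforward (int d) g) = pushforward (int d - 1) (boundary K (int d) g)"
proof
  fix T
  show "boundary Y (int d) (pushforward (int d) g) T = pushforward (int d - 1) (boundary K (int d) g) T"
  proof (cases "T \<in> kfaces Y (int d - 1)")
    case False
    then show ?thesis by (simp add: boundary_def pushforward_def)
  next
    case True
    then obtain t where t: "t \<in> kfaces K (int d - 1)" "T = c ` t"
      by (auto simp: kfaces_pattern_complex)
    let ?A = "{s\<in>kfaces K (int d). t \<subseteq> s}"
    have summand: "incidence (c ` s) T * pushforward (int d) g (c ` s) = inversion_sign c t * (incidence s t * g s)"
      if s: "s \<in> ?A" for s
    proof -
      have sK: "s \<in> K" and fs: "finite s" and ts: "t \<subseteq> s" and "card s = card t + 1"
        using s t finite_face by (auto simp: kfaces_def)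
      then have "card (s - t) = 1" by (simp add: card_Diff_subset finite_subset)
      then obtain w where "s - t = {w}" by (rule card_1_singletonE)
      then have w: "s = insert w t" "w \<notin> t" using ts by auto
      have "incidence (c ` s) T * pushforward (int d) g (c ` s) = incidence (c ` s) (c ` t) * inversion_sign c s * g s"
        using pushforward_image[OF inj_on_image_facets[OF assms]] s t(2) by simp
      also have "\<dots> = inversion_sign c t * incidence s t * g s"
        using incidence_image[of t w c] w fs inj_on_face[OF sK] by simp
      finally show ?thesis by simp
    qed
    have "boundary Y (int d) (pushforward (int d) g) T
        = (\<Sum>S\<in>(`) c ` ?A. incidence S T * pushforward (int d) g S)"
      using True t cofaces_pattern_complex by (simp add: boundary_apply)
    also have "\<dots> = (\<Sum>s\<in>?A. inversion_sign c t * (incidence s t * g s))"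
      using inj_on_subset[OF inj_on_image_facets[OF assms]] summand by (simp add: sum.reindex)
    also have "\<dots> = pushforward (int d - 1) (boundary K (int d) g) T"
      using t inj_on_image_ridges
      by (simp add: boundary_apply pushforward_image sum_distrib_left)
    finally show ?thesis .
  qed
qed

lemma pushforward_boundaries:
  "pushforward (int d - 1) ` boundaries K (int d - 1) = boundaries Y (int d - 1)"
proof (cases "d = 0")
  case True
  have "pushforward (-1) (\<lambda>_. 0) = (\<lambda>_. 0)" by (simp add: pushforward_def fun_eq_iff)
  moreover have "boundaries K (-1) = {\<lambda>_. 0}"
    by (rule boundaries_minus_one) (simp add: finite_face)
  moreover have "boundaries Y (-1) = {\<lambda>_. 0}"
    by (rule boundaries_minus_one)
      (use simplicial_complex_pattern_complex in \<open>simp add: simplicial_complex_def\<close>)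
  ultimately show ?thesis using True by simp
next
  case False
  then have surj: "pushforward (int d) ` carrier (chain_group K (int d)) = carrier (chain_group Y (int d))"
    using pushforward_iso[OF inj_on_image_facets] by (simp add: Group.iso_iff)
  have "pushforward (int d - 1) ` boundaries K (int d - 1)
      = boundary Y (int d) ` pushforward (int d) ` carrier (chain_group K (int d))"
    using False by (simp add: boundaries_def image_image boundary_pushforward)
  also have "\<dots> = boundaries Y (int d - 1)" by (simp add: surj boundaries_def)
  finally show ?thesis .
qed

end

theorem lemma2:
  fixes K :: "'a::linorder set set" and c :: "'a \<Rightarrow> 'b::linorder" and d :: nat
  assumes "simplicial_complex K"
    and "dimension_is K d"
    and "proper_coloring K c"
    and "\<forall>s\<in>kfaces K (int d - 1). \<forall>t\<in>kfaces K (int d - 1).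
           pattern c s = pattern c t \<longrightarrow> s = t"
  shows "torsion_subgroup (homology K (int d - 1))
           \<cong> torsion_subgroup (homology (pattern_complex K c) (int d - 1))"
proof -
  interpret pattern_coloring K c d
    using assms by (simp add: pattern_coloring_def)
  show ?thesis
    by (rule torsion_homology_iso[OF complex simplicial_complex_pattern_complex
          pushforward_iso[OF inj_on_image_ridges] pushforward_boundaries])
qed

end
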